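(* Let $p$ be an odd prime, let $\Delta\in\mathbb{Z}$ with $\Delta\equiv 3\pmod 4$ be a quadratic non-residue modulo $p$, and let $\mathfrak{p}=p\mathbb{Z}[\sqrt{\Delta}]$. For $0\le k\le p-1$ let $a_k=k+\sqrt{\Delta}$, and let $B_p=\prod_{0\le k\le p-1}(1-a_k^{p-1})$. Then $$B_p^{\frac{p-1}{2}}\equiv 1\pmod{\mathfrak{p}}.$$ *)

theory Defs
  imports "HOL-Number_Theory.Number_Theory"
begin

text \<open>Elements of Z[sqrt D] are represented as pairs (a, b) of integers, standing for a + b sqrt D.\<close>

type_synonym zsqrt = "int \<times> int"

definition zs_mult :: "int \<Rightarrow> zsqrt \<Rightarrow> zsqrt \<Rightarrow> zsqrt" where
  "zs_mult D x y = (fst x * fst y + D * snd x * snd y, fst x * snd y + snd x * fst y)"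

definition zs_one :: zsqrt where "zs_one = (1, 0)"

definition zs_sub :: "zsqrt \<Rightarrow> zsqrt \<Rightarrow> zsqrt" where
  "zs_sub x y = (fst x - fst y, snd x - snd y)"

fun zs_pow :: "int \<Rightarrow> zsqrt \<Rightarrow> nat \<Rightarrow> zsqrt" where
  "zs_pow D x 0 = zs_one"
| "zs_pow D x (Suc n) = zs_mult D x (zs_pow D x n)"

definition zs_prod_list :: "int \<Rightarrow> zsqrt list \<Rightarrow> zsqrt" where
  "zs_prod_list D xs = foldr (zs_mult D) xs zs_one"

text \<open>x is congruent to y modulo the ideal p Z[sqrt D]: both coordinates of x - y divisible by p.\<close>
definition zs_cong :: "int \<Rightarrow> zsqrt \<Rightarrow> zsqrt \<Rightarrow> bool" where
  "zs_cong p x y \<longleftrightarrow> p dvd fst (zs_sub x y) \<and> p dvd snd (zs_sub x y)"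

definition B_p :: "int \<Rightarrow> nat \<Rightarrow> zsqrt" where
  "B_p D p = zs_prod_list D (map (\<lambda>k. zs_sub zs_one (zs_pow D (int k, 1) (p - 1))) [0..<p])"

end

theory Submission
  imports Defs "HOL-Computational_Algebra.Polynomial" "HOL-Computational_Algebra.Nth_Powers"
begin

text \<open>
  Realise \<open>\<int>[\<surd>D]\<close> inside \<open>\<complex>\<close>, write \<open>s = \<surd>D\<close> and \<open>a_k = k + s\<close>, and read all
  congruences modulo \<open>p\<int>[\<surd>D]\<close>. As \<open>D\<close> is a non-residue, Euler's criterion gives
  \<open>s^p \<equiv> -s\<close>, hence by Frobenius \<open>a_k^p \<equiv> k - s\<close> and \<open>a_k (1 - a_k^(p-1)) = a_k - a_k^p \<equiv> 2s\<close>.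
  On the other hand \<open>\<Prod>_k a_k\<close> is the rising factorial \<open>X(X+1)...(X+p-1) \<equiv> X^p - X (mod p)\<close>
  evaluated at \<open>s\<close>, so \<open>\<Prod>_k a_k \<equiv> s^p - s \<equiv> -2s\<close>. Multiplying the factor congruences gives
  \<open>-2s B_p \<equiv> (2s)^p \<equiv> -2s\<close>, and \<open>2s\<close> cancels since \<open>p\<close> divides neither \<open>2\<close> nor \<open>D\<close>.
\<close>

lemma fermat_little:
  fixes a p :: nat
  assumes "prime p"
  shows "[a ^ p = a] (mod p)"
proof (cases "p dvd a")
  case True
  then have "[a = 0] (mod p)"
    by (simp add: cong_0_iff)
  moreover from this have "[a ^ p = 0] (mod p)"
    using assms cong_pow[of a 0 p p] by (simp add: prime_gt_0_nat zero_power)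
  ultimately show ?thesis
    by (meson cong_sym cong_trans)
next
  case False
  then have "[a ^ (p - 1) * a = 1 * a] (mod p)"
    using assms fermat_theorem cong_scalar_right by blast
  then show ?thesis
    using assms by (simp add: power_Suc2[symmetric] prime_gt_0_nat)
qed

lemma prime_dvd_poly_synthetic_div:
  fixes g :: "int poly" and q c d :: int
  assumes "prime q" "\<not> q dvd c - d" "q dvd poly g c" "q dvd poly g d"
  shows "q dvd poly (synthetic_div g d) c"
proof -
  have "poly g c = (c - d) * poly (synthetic_div g d) c + poly g d"
    by (subst synthetic_div_correct'[of d g, symmetric]) (simp add: algebra_simps)
  then have "q dvd (c - d) * poly (synthetic_div g d) c"
    using assms(3,4) by (metis dvd_add_left_iff)
  then show ?thesis
    using assms(1,2) by (simp add: prime_dvd_mult_iff)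
qed

lemma int_poly_multiple_of_prime:
  fixes g :: "int poly"
  assumes "prime p" and "m \<le> p" and "degree g < m"
    and "\<forall>c<m. int p dvd poly g (int c)"
  shows "\<exists>r. g = smult (int p) r"
  using assms(2-)
proof (induction m arbitrary: g)
  case 0
  then show ?case by simp
next
  case (Suc m)
  obtain t where t: "poly g (int m) = int p * t"
    using Suc.prems(3) by blast
  show ?case
  proof (cases "degree g = 0")
    case True
    then have "g = smult (int p) [:t:]"
      using t by (auto elim!: degree_eq_zeroE)
    then show ?thesis ..
  next
    case False
    define q where "q = synthetic_div g (int m)"
    have "\<not> int p dvd int c - int m" if "c < m" for c
    proof
      assume "int p dvd int c - int m"
      then have "int p dvd int m - int c"
        by (simp add: dvd_diff_commute)
      then show False
        using zdvd_imp_le[of "int p" "int m - int c"] that Suc.prems(1) by linarith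
    qed
    then have "\<forall>c<m. int p dvd poly q (int c)"
      unfolding q_def using Suc.prems(3) assms(1)
      by (auto intro!: prime_dvd_poly_synthetic_div)
    moreover have "degree q < m"
      using False Suc.prems(2) by (simp add: q_def degree_synthetic_div)
    ultimately obtain r where "q = smult (int p) r"
      using Suc.IH Suc.prems(1) by auto
    then have "g = smult (int p) ([:- int m, 1:] * r + [:t:])"
      using synthetic_div_correct'[of "int m" g] t by (simp add: q_def smult_add_right)
    then show ?thesis ..
  qed
qed

lemma rising_prod_poly_cong:
  assumes "prime p"
  shows "\<exists>r. (\<Prod>k<p. [:int k, 1:]) = monom 1 p - [:0, 1:] + smult (int p) r"
proof -
  define Q :: "int poly" where "Q = (\<Prod>k<p. [:int k, 1:])"
  have p2: "p \<ge> 2"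
    using assms prime_ge_2_nat by blast
  have "degree Q = p"
    unfolding Q_def by (subst degree_prod_eq_sum_degree) auto
  moreover have "coeff Q p = 1"
    using lead_coeff_prod[of "\<lambda>k. [:int k, 1:]" "{..<p}"] \<open>degree Q = p\<close> by (simp add: Q_def)
  ultimately have "degree (Q - monom 1 p + [:0, 1:]) < p"
    using p2 by (intro degree_lessI) (auto simp: coeff_eq_0 coeff_pCons split: nat.split)
  moreover have "int p dvd poly (Q - monom 1 p + [:0, 1:]) (int c)" if "c < p" for c
  proof -
    have "int p dvd (\<Prod>k<p. int c + int k)"
    proof (cases "c = 0")
      case False
      then have "int c + int (p - c) dvd (\<Prod>k<p. int c + int k)"
        using that by (intro dvd_prodI) auto
      then show ?thesis
        using that by simp
    next
      case True
      have "(\<Prod>k<p. int c + int k) = 0"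
        using p2 True by (auto simp: prod_zero_iff)
      then show ?thesis
        by (metis dvd_0_right)
    qed
    moreover have "int p dvd int c ^ p - int c"
      using fermat_little[OF assms, of c] by (metis cong_iff_dvd_diff cong_int_iff of_nat_power)
    ultimately have "int p dvd (\<Prod>k<p. int c + int k) - (int c ^ p - int c)"
      by (rule dvd_diff)
    then show ?thesis
      by (simp add: Q_def poly_prod poly_monom algebra_simps)
  qed
  ultimately obtain r where r: "Q - monom 1 p + [:0, 1:] = smult (int p) r"
    using int_poly_multiple_of_prime[OF assms order.refl] by blast
  have "Q = monom 1 p - [:0, 1:] + smult (int p) r"
    by (simp flip: r)
  then show ?thesis
    unfolding Q_def ..
qed

lemma map_poly_of_int_add:
  "map_poly (of_int :: int \<Rightarrow> 'a::comm_ring_1) (f + g) = map_poly of_int f + map_poly of_int g"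
  by (intro poly_eqI) (simp add: coeff_map_poly)

lemma map_poly_of_int_diff:
  "map_poly (of_int :: int \<Rightarrow> 'a::comm_ring_1) (f - g) = map_poly of_int f - map_poly of_int g"
  by (intro poly_eqI) (simp add: coeff_map_poly)

lemma map_poly_of_int_mult:
  "map_poly (of_int :: int \<Rightarrow> 'a::comm_ring_1) (f * g) = map_poly of_int f * map_poly of_int g"
  by (intro poly_eqI) (simp add: coeff_map_poly coeff_mult)

lemma map_poly_of_int_prod:
  "map_poly (of_int :: int \<Rightarrow> 'a::comm_ring_1) (\<Prod>k\<in>A. f k) = (\<Prod>k\<in>A. map_poly of_int (f k))"
  by (induction A rule: infinite_finite_induct) (auto simp: map_poly_of_int_mult)

definition sqrtD :: "int \<Rightarrow> complex" where
  "sqrtD D = csqrt (of_int D)"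

definition Zsqrt :: "int \<Rightarrow> complex set" where
  "Zsqrt D = {of_int a + of_int b * sqrtD D | a b. True}"

definition cong_Zsqrt :: "int \<Rightarrow> int \<Rightarrow> complex \<Rightarrow> complex \<Rightarrow> bool" where
  "cong_Zsqrt D m x y \<longleftrightarrow> (\<exists>z\<in>Zsqrt D. x - y = of_int m * z)"

lemma sqrtD_times_sqrtD [simp]: "sqrtD D * sqrtD D = of_int D"
  using power2_csqrt[of "of_int D"] by (simp add: sqrtD_def power2_eq_square)

lemma ZsqrtI: "x = of_int a + of_int b * sqrtD D \<Longrightarrow> x \<in> Zsqrt D"
  unfolding Zsqrt_def by blast

lemma ZsqrtE:
  assumes "x \<in> Zsqrt D"
  obtains a b where "x = of_int a + of_int b * sqrtD D"
  using assms unfolding Zsqrt_def by blast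

lemma of_int_in_Zsqrt [simp]: "of_int a \<in> Zsqrt D"
  by (rule ZsqrtI[of _ a 0]) simp

lemma of_nat_in_Zsqrt [simp]: "of_nat n \<in> Zsqrt D"
  using of_int_in_Zsqrt[of "int n" D] by simp

lemma zero_in_Zsqrt [simp]: "0 \<in> Zsqrt D"
  using of_int_in_Zsqrt[of 0 D] by simp

lemma one_in_Zsqrt [simp]: "1 \<in> Zsqrt D"
  using of_int_in_Zsqrt[of 1 D] by simp

lemma numeral_in_Zsqrt [simp]: "numeral n \<in> Zsqrt D"
  using of_nat_in_Zsqrt[of "numeral n" D] by simp

lemma sqrtD_in_Zsqrt [simp]: "sqrtD D \<in> Zsqrt D"
  by (rule ZsqrtI[of _ 0 1]) simp

lemma Zsqrt_add [simp]: "x \<in> Zsqrt D \<Longrightarrow> y \<in> Zsqrt D \<Longrightarrow> x + y \<in> Zsqrt D"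
proof (elim ZsqrtE)
  fix a b c d
  assume "x = of_int a + of_int b * sqrtD D" "y = of_int c + of_int d * sqrtD D"
  then show "x + y \<in> Zsqrt D"
    by (intro ZsqrtI[of _ "a + c" "b + d"]) (simp add: algebra_simps)
qed

lemma Zsqrt_minus [simp]: "x \<in> Zsqrt D \<Longrightarrow> - x \<in> Zsqrt D"
proof (elim ZsqrtE)
  fix a b
  assume "x = of_int a + of_int b * sqrtD D"
  then show "- x \<in> Zsqrt D"
    by (intro ZsqrtI[of _ "- a" "- b"]) simp
qed

lemma Zsqrt_diff [simp]: "x \<in> Zsqrt D \<Longrightarrow> y \<in> Zsqrt D \<Longrightarrow> x - y \<in> Zsqrt D"
  using Zsqrt_add[of x D "- y"] by simp

lemma Zsqrt_mult [simp]: "x \<in> Zsqrt D \<Longrightarrow> y \<in> Zsqrt D \<Longrightarrow> x * y \<in> Zsqrt D"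
proof (elim ZsqrtE)
  fix a b c d
  assume "x = of_int a + of_int b * sqrtD D" "y = of_int c + of_int d * sqrtD D"
  then have "x * y = of_int (a * c + D * b * d) + of_int (a * d + b * c) * sqrtD D"
    by (simp add: algebra_simps)
  then show "x * y \<in> Zsqrt D"
    by (rule ZsqrtI)
qed

lemma Zsqrt_power [simp]: "x \<in> Zsqrt D \<Longrightarrow> x ^ n \<in> Zsqrt D"
  by (induction n) auto

lemma Zsqrt_sum: "(\<And>k. k \<in> A \<Longrightarrow> f k \<in> Zsqrt D) \<Longrightarrow> (\<Sum>k\<in>A. f k) \<in> Zsqrt D"
  by (induction A rule: infinite_finite_induct) auto

lemma Zsqrt_prod: "(\<And>k. k \<in> A \<Longrightarrow> f k \<in> Zsqrt D) \<Longrightarrow> (\<Prod>k\<in>A. f k) \<in> Zsqrt D"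
  by (induction A rule: infinite_finite_induct) auto

lemma Zsqrt_eq_0_iff:
  assumes "\<not> is_square D"
  shows "of_int a + of_int b * sqrtD D = 0 \<longleftrightarrow> a = 0 \<and> b = 0"
proof
  assume eq: "of_int a + of_int b * sqrtD D = 0"
  have "b = 0"
  proof (rule ccontr)
    assume "b \<noteq> 0"
    have "of_int a = - (of_int b * sqrtD D)"
      using eq by (simp add: eq_neg_iff_add_eq_0)
    then have "of_int (a ^ 2) = (of_int b * sqrtD D) ^ 2"
      by simp
    also have "\<dots> = of_int (D * b ^ 2)"
      by (simp add: power2_eq_square algebra_simps)
    finally have sq: "a ^ 2 = D * b ^ 2"
      by (simp only: of_int_eq_iff)
    then have "b ^ 2 dvd a ^ 2"
      by simp
    then have "b dvd a"
      by simp
    then obtain c where "a = b * c"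
      by blast
    then have "D = c ^ 2"
      using sq \<open>b \<noteq> 0\<close> by (simp add: power_mult_distrib)
    then show False
      using assms by auto
  qed
  then show "a = 0 \<and> b = 0"
    using eq by simp
qed simp

lemma cong_Zsqrt_0_iff:
  assumes "\<not> is_square D"
  shows "cong_Zsqrt D m (of_int a + of_int b * sqrtD D) 0 \<longleftrightarrow> m dvd a \<and> m dvd b"
proof
  assume "cong_Zsqrt D m (of_int a + of_int b * sqrtD D) 0"
  then obtain u v where "of_int a + of_int b * sqrtD D = of_int m * (of_int u + of_int v * sqrtD D)"
    unfolding cong_Zsqrt_def by (auto elim!: ZsqrtE)
  then have "of_int (a - m * u) + of_int (b - m * v) * sqrtD D = 0"
    by (simp add: algebra_simps)
  then have "a - m * u = 0 \<and> b - m * v = 0"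
    using Zsqrt_eq_0_iff[OF assms] by blast
  then show "m dvd a \<and> m dvd b"
    by simp
next
  assume "m dvd a \<and> m dvd b"
  then obtain u v where "a = m * u" "b = m * v"
    by (auto elim!: dvdE)
  then have "of_int a + of_int b * sqrtD D - 0 = of_int m * (of_int u + of_int v * sqrtD D)"
    by (simp add: algebra_simps)
  then show "cong_Zsqrt D m (of_int a + of_int b * sqrtD D) 0"
    unfolding cong_Zsqrt_def using ZsqrtI[of _ u v D] by blast
qed

lemma cong_Zsqrt_refl [simp]: "cong_Zsqrt D m x x"
  unfolding cong_Zsqrt_def by (intro bexI[of _ 0]) auto

lemma cong_Zsqrt_iff_diff_0: "cong_Zsqrt D m x y \<longleftrightarrow> cong_Zsqrt D m (x - y) 0"
  by (simp add: cong_Zsqrt_def)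

lemma cong_Zsqrt_sym:
  assumes "cong_Zsqrt D m x y"
  shows "cong_Zsqrt D m y x"
proof -
  obtain u where "u \<in> Zsqrt D" "x - y = of_int m * u"
    using assms unfolding cong_Zsqrt_def by blast
  then have "- u \<in> Zsqrt D" "y - x = of_int m * - u"
    by (simp_all add: algebra_simps)
  then show ?thesis
    unfolding cong_Zsqrt_def by blast
qed

lemma cong_Zsqrt_add:
  assumes "cong_Zsqrt D m x x'" "cong_Zsqrt D m y y'"
  shows "cong_Zsqrt D m (x + y) (x' + y')"
proof -
  obtain u v where "u \<in> Zsqrt D" "x - x' = of_int m * u" "v \<in> Zsqrt D" "y - y' = of_int m * v"
    using assms unfolding cong_Zsqrt_def by blast
  moreover have "x + y - (x' + y') = (x - x') + (y - y')"
    by simp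
  ultimately have "u + v \<in> Zsqrt D" "x + y - (x' + y') = of_int m * (u + v)"
    by (simp_all add: distrib_left)
  then show ?thesis
    unfolding cong_Zsqrt_def by blast
qed

lemma cong_Zsqrt_diff:
  assumes "cong_Zsqrt D m x x'" "cong_Zsqrt D m y y'"
  shows "cong_Zsqrt D m (x - y) (x' - y')"
proof -
  obtain u v where "u \<in> Zsqrt D" "x - x' = of_int m * u" "v \<in> Zsqrt D" "y - y' = of_int m * v"
    using assms unfolding cong_Zsqrt_def by blast
  moreover have "x - y - (x' - y') = (x - x') - (y - y')"
    by simp
  ultimately have "u - v \<in> Zsqrt D" "x - y - (x' - y') = of_int m * (u - v)"
    by (simp_all add: right_diff_distrib)
  then show ?thesis
    unfolding cong_Zsqrt_def by blast
qed

lemma cong_Zsqrt_trans [trans]: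
  "cong_Zsqrt D m x y \<Longrightarrow> cong_Zsqrt D m y z \<Longrightarrow> cong_Zsqrt D m x z"
  using cong_Zsqrt_add[of D m x y y z] unfolding cong_Zsqrt_def by simp

lemma cong_Zsqrt_mult:
  assumes "cong_Zsqrt D m x x'" "cong_Zsqrt D m y y'" "x' \<in> Zsqrt D" "y \<in> Zsqrt D"
  shows "cong_Zsqrt D m (x * y) (x' * y')"
proof -
  obtain u v where "u \<in> Zsqrt D" "x - x' = of_int m * u" "v \<in> Zsqrt D" "y - y' = of_int m * v"
    using assms(1,2) unfolding cong_Zsqrt_def by blast
  moreover have "x * y - x' * y' = (x - x') * y + x' * (y - y')"
    by (simp add: algebra_simps)
  ultimately have "x * y - x' * y' = of_int m * (u * y + x' * v)"
    by (simp add: algebra_simps)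
  then show ?thesis
    unfolding cong_Zsqrt_def using \<open>u \<in> Zsqrt D\<close> \<open>v \<in> Zsqrt D\<close> assms(3,4) by auto
qed

lemma cong_Zsqrt_power:
  "cong_Zsqrt D m x y \<Longrightarrow> x \<in> Zsqrt D \<Longrightarrow> y \<in> Zsqrt D \<Longrightarrow> cong_Zsqrt D m (x ^ n) (y ^ n)"
  by (induction n) (auto intro: cong_Zsqrt_mult)

lemma cong_Zsqrt_prod:
  assumes "\<And>k. k \<in> A \<Longrightarrow> cong_Zsqrt D m (f k) (g k)"
    and "\<And>k. k \<in> A \<Longrightarrow> f k \<in> Zsqrt D" "\<And>k. k \<in> A \<Longrightarrow> g k \<in> Zsqrt D"
  shows "cong_Zsqrt D m (\<Prod>k\<in>A. f k) (\<Prod>k\<in>A. g k)"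
  using assms by (induction A rule: infinite_finite_induct) (auto intro!: cong_Zsqrt_mult Zsqrt_prod)

lemma cong_Zsqrt_of_int:
  assumes "[a = b] (mod m)"
  shows "cong_Zsqrt D m (of_int a) (of_int b)"
proof -
  obtain k where "a - b = m * k"
    using assms by (auto simp: cong_iff_dvd_diff elim!: dvdE)
  then have "of_int a - of_int b = of_int m * (of_int k :: complex)"
    by (metis of_int_diff of_int_mult)
  then show ?thesis
    unfolding cong_Zsqrt_def by (intro bexI[of _ "of_int k"]) simp_all
qed

lemma cong_Zsqrt_frobenius:
  assumes "prime p" "x \<in> Zsqrt D" "y \<in> Zsqrt D"
  shows "cong_Zsqrt D (int p) ((x + y) ^ p) (x ^ p + y ^ p)"
proof -
  define A where "A = {0<..<p}"
  define z where "z = (\<Sum>k\<in>A. of_nat ((p choose k) div p) * x ^ k * y ^ (p - k))"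
  have "{..p} = insert 0 (insert p A)"
    using assms(1) by (auto simp: A_def)
  moreover have "of_nat (p choose k) = of_nat p * (of_nat ((p choose k) div p) :: complex)"
    if "k \<in> A" for k
    using dvd_choose_prime[of k p] that assms(1) by (simp add: A_def flip: of_nat_mult)
  ultimately have "(x + y) ^ p = y ^ p + x ^ p + of_nat p * z"
    using assms(1) by (simp add: binomial_ring A_def z_def sum_distrib_left mult.assoc prime_gt_0_nat)
  moreover have "z \<in> Zsqrt D"
    unfolding z_def using assms(2,3) by (intro Zsqrt_sum) simp
  ultimately show ?thesis
    unfolding cong_Zsqrt_def by (intro bexI[of _ z]) simp_all
qed

lemma cong_Zsqrt_pochhammer:
  assumes "prime p" "x \<in> Zsqrt D"
  shows "cong_Zsqrt D (int p) (pochhammer x p) (x ^ p - x)"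
proof -
  obtain r where r: "(\<Prod>k<p. [:int k, 1:]) = monom 1 p - [:0, 1:] + smult (int p) r"
    using rising_prod_poly_cong[OF assms(1)] by blast
  define z where "z = poly (map_poly of_int r) x"
  have "poly (map_poly of_int (\<Prod>k<p. [:int k, 1:])) x = pochhammer x p"
    by (simp add: map_poly_of_int_prod map_poly_pCons poly_prod pochhammer_prod
        atLeast0LessThan add.commute)
  then have "pochhammer x p = x ^ p - x + of_nat p * z"
    by (simp add: r z_def map_poly_of_int_add map_poly_of_int_diff map_poly_monom
        map_poly_pCons map_poly_smult poly_monom)
  moreover have "z \<in> Zsqrt D"
    unfolding z_def poly_altdef using assms(2) by (intro Zsqrt_sum) (simp add: coeff_map_poly)
  ultimately show ?thesis
    unfolding cong_Zsqrt_def by (intro bexI[of _ z]) simp_all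
qed

lemma cong_Zsqrt_cancel_sqrtD:
  fixes p :: int
  assumes "\<not> is_square D" "prime p" "\<not> p dvd c" "\<not> p dvd D" "z \<in> Zsqrt D"
    and "cong_Zsqrt D p (of_int c * sqrtD D * z) 0"
  shows "cong_Zsqrt D p z 0"
proof -
  obtain a b where z: "z = of_int a + of_int b * sqrtD D"
    using assms(5) by (rule ZsqrtE)
  then have eq: "of_int c * sqrtD D * z = of_int (c * D * b) + of_int (c * a) * sqrtD D"
    by (simp add: algebra_simps)
  have "p dvd c * D * b \<and> p dvd c * a"
    using assms(6) unfolding eq cong_Zsqrt_0_iff[OF assms(1)] .
  then have "p dvd a \<and> p dvd b"
    using assms(2-4) by (simp add: prime_dvd_mult_iff)
  then show ?thesis
    unfolding z using cong_Zsqrt_0_iff[OF assms(1)] by blast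
qed

lemma not_QuadRes_not_dvd: "\<not> QuadRes p D \<Longrightarrow> \<not> p dvd D"
  unfolding QuadRes_def by (metis cong_0_iff cong_sym power_zero_numeral)

lemma not_QuadRes_not_square: "\<not> QuadRes p D \<Longrightarrow> \<not> is_square D"
  unfolding QuadRes_def is_nth_power_def by (metis cong_refl)

lemma sqrtD_pow_prime_cong:
  assumes "prime p" "p > 2" "\<not> QuadRes (int p) D"
  shows "cong_Zsqrt D (int p) (sqrtD D ^ p) (- sqrtD D)"
proof -
  define h where "h = (p - 1) div 2"
  have p_eq: "p = Suc (2 * h)"
    using assms(1,2) prime_odd_nat unfolding h_def by fastforce
  have "Legendre D (int p) = -1"
    using assms(3) not_QuadRes_not_dvd[OF assms(3)] by (simp add: Legendre_def cong_0_iff)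
  then have "[D ^ h = -1] (mod int p)"
    using euler_criterion[OF assms(1,2), of D] by (simp add: h_def cong_sym_eq)
  then have "cong_Zsqrt D (int p) (of_int (D ^ h) * sqrtD D) (of_int (-1) * sqrtD D)"
    by (intro cong_Zsqrt_mult cong_Zsqrt_of_int) auto
  moreover have "sqrtD D ^ p = of_int (D ^ h) * sqrtD D"
    unfolding p_eq by (simp add: power_mult power2_eq_square)
  ultimately show ?thesis
    by simp
qed

lemma shift_sqrtD_pow_prime_cong:
  assumes "prime p" "p > 2" "\<not> QuadRes (int p) D"
  shows "cong_Zsqrt D (int p) ((of_nat k + sqrtD D) ^ p) (of_nat k - sqrtD D)"
proof -
  have "cong_Zsqrt D (int p) ((of_nat k + sqrtD D) ^ p) (of_nat k ^ p + sqrtD D ^ p)"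
    using assms(1) by (rule cong_Zsqrt_frobenius) simp_all
  also have "cong_Zsqrt D (int p) (of_nat k ^ p + sqrtD D ^ p) (of_nat k + - sqrtD D)"
  proof (rule cong_Zsqrt_add)
    show "cong_Zsqrt D (int p) (of_nat k ^ p) (of_nat k)"
      using cong_Zsqrt_of_int[of "int k ^ p" "int k" "int p" D] fermat_little[OF assms(1), of k]
      by (simp add: cong_int_iff flip: of_nat_power)
  qed (rule sqrtD_pow_prime_cong[OF assms])
  finally show ?thesis
    by simp
qed

lemma sqrtD_factor_cong:
  assumes "prime p" "p > 2" "\<not> QuadRes (int p) D"
  shows "cong_Zsqrt D (int p)
    ((of_nat k + sqrtD D) * (1 - (of_nat k + sqrtD D) ^ (p - 1))) (2 * sqrtD D)"
proof -
  define a where "a = of_nat k + sqrtD D"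
  have "a ^ p = a * a ^ (p - 1)"
    using assms(1) by (metis Suc_diff_1 power_Suc prime_gt_0_nat)
  then have "a * (1 - a ^ (p - 1)) = a - a ^ p"
    by (simp add: right_diff_distrib)
  also have "cong_Zsqrt D (int p) \<dots> (a - (of_nat k - sqrtD D))"
    unfolding a_def using assms by (intro cong_Zsqrt_diff shift_sqrtD_pow_prime_cong) simp
  also have "a - (of_nat k - sqrtD D) = 2 * sqrtD D"
    by (simp add: a_def)
  finally show ?thesis
    unfolding a_def .
qed

lemma pochhammer_sqrtD_cong:
  assumes "prime p" "p > 2" "\<not> QuadRes (int p) D"
  shows "cong_Zsqrt D (int p) (pochhammer (sqrtD D) p) (- 2 * sqrtD D)"
proof -
  have "cong_Zsqrt D (int p) (pochhammer (sqrtD D) p) (sqrtD D ^ p - sqrtD D)"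
    using assms(1) by (rule cong_Zsqrt_pochhammer) simp
  also have "cong_Zsqrt D (int p) \<dots> (- sqrtD D - sqrtD D)"
    using sqrtD_pow_prime_cong[OF assms] by (rule cong_Zsqrt_diff) simp
  finally show ?thesis
    by simp
qed

lemma prod_one_minus_pow_cong_1:
  assumes "prime p" "p > 2" "\<not> QuadRes (int p) D"
  shows "cong_Zsqrt D (int p) (\<Prod>k<p. 1 - (of_nat k + sqrtD D) ^ (p - 1)) 1"
proof -
  define s where "s = sqrtD D"
  define B where "B = (\<Prod>k<p. 1 - (of_nat k + s) ^ (p - 1))"
  have [simp]: "s \<in> Zsqrt D" "B \<in> Zsqrt D"
    by (simp_all add: s_def B_def Zsqrt_prod)
  have "pochhammer s p * B = (\<Prod>k<p. (of_nat k + s) * (1 - (of_nat k + s) ^ (p - 1)))"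
    by (simp add: pochhammer_prod atLeast0LessThan B_def prod.distrib add.commute)
  also have "cong_Zsqrt D (int p) \<dots> (\<Prod>k<p. 2 * s)"
    unfolding s_def using sqrtD_factor_cong[OF assms] by (intro cong_Zsqrt_prod) simp_all
  also have "(\<Prod>k<p. 2 * s) = of_int (2 ^ p) * s ^ p"
    by (simp add: power_mult_distrib)
  also have "cong_Zsqrt D (int p) \<dots> (of_int 2 * - s)"
    using fermat_little[OF assms(1), of 2] sqrtD_pow_prime_cong[OF assms]
    by (intro cong_Zsqrt_mult cong_Zsqrt_of_int)
      (simp_all add: s_def cong_int_iff flip: cong_int_iff[of "2 ^ p"])
  finally have "cong_Zsqrt D (int p) (pochhammer s p * B) (- 2 * s)"
    by simp
  moreover have "cong_Zsqrt D (int p) (pochhammer s p * B) (- 2 * s * B)"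
    unfolding s_def using pochhammer_sqrtD_cong[OF assms] by (rule cong_Zsqrt_mult) (simp_all flip: s_def)
  ultimately have "cong_Zsqrt D (int p) (- 2 * s * B - - 2 * s) 0"
    by (metis cong_Zsqrt_sym cong_Zsqrt_trans cong_Zsqrt_iff_diff_0)
  moreover have "- 2 * s * B - - 2 * s = of_int (- 2) * sqrtD D * (B - 1)"
    by (simp add: s_def algebra_simps)
  moreover have "prime (int p)" "\<not> int p dvd - 2" "B - 1 \<in> Zsqrt D"
    using assms(1,2) by (auto dest: zdvd_imp_le)
  ultimately have "cong_Zsqrt D (int p) (B - 1) 0"
    using cong_Zsqrt_cancel_sqrtD not_QuadRes_not_square[OF assms(3)] not_QuadRes_not_dvd[OF assms(3)]
    by metis
  then have "cong_Zsqrt D (int p) B 1"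
    by (simp only: cong_Zsqrt_iff_diff_0[of D "int p" B 1])
  then show ?thesis
    unfolding B_def s_def .
qed

definition zs_to_complex :: "int \<Rightarrow> zsqrt \<Rightarrow> complex" where
  "zs_to_complex D x = of_int (fst x) + of_int (snd x) * sqrtD D"

lemma zs_to_complex_one [simp]: "zs_to_complex D zs_one = 1"
  by (simp add: zs_to_complex_def zs_one_def)

lemma zs_to_complex_sub: "zs_to_complex D (zs_sub x y) = zs_to_complex D x - zs_to_complex D y"
  by (simp add: zs_to_complex_def zs_sub_def algebra_simps)

lemma zs_to_complex_mult: "zs_to_complex D (zs_mult D x y) = zs_to_complex D x * zs_to_complex D y"
  by (simp add: zs_to_complex_def zs_mult_def algebra_simps)

lemma zs_to_complex_pow: "zs_to_complex D (zs_pow D x n) = zs_to_complex D x ^ n"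
  by (induction n) (simp_all add: zs_to_complex_mult)

lemma zs_to_complex_prod_list:
  "zs_to_complex D (zs_prod_list D xs) = (\<Prod>x\<leftarrow>xs. zs_to_complex D x)"
  unfolding zs_prod_list_def by (induction xs) (simp_all add: zs_to_complex_mult)

lemma zs_to_complex_B_p:
  "zs_to_complex D (B_p D p) = (\<Prod>k<p. 1 - (of_nat k + sqrtD D) ^ (p - 1))"
proof -
  have "zs_to_complex D (B_p D p) = (\<Prod>k\<leftarrow>[0..<p]. 1 - (of_nat k + sqrtD D) ^ (p - 1))"
    by (simp add: B_p_def zs_to_complex_prod_list zs_to_complex_sub zs_to_complex_pow o_def)
      (simp add: zs_to_complex_def)
  also have "\<dots> = (\<Prod>k<p. 1 - (of_nat k + sqrtD D) ^ (p - 1))"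
    by (subst prod.distinct_set_conv_list[symmetric]) (simp_all add: atLeast0LessThan)
  finally show ?thesis .
qed

lemma zs_cong_iff_cong_Zsqrt:
  assumes "\<not> is_square D"
  shows "zs_cong m x y \<longleftrightarrow> cong_Zsqrt D m (zs_to_complex D x) (zs_to_complex D y)"
proof -
  have eq: "zs_to_complex D x - zs_to_complex D y
      = of_int (fst x - fst y) + of_int (snd x - snd y) * sqrtD D"
    by (simp add: zs_to_complex_def algebra_simps)
  show ?thesis
    unfolding cong_Zsqrt_iff_diff_0[of D m "zs_to_complex D x"] eq cong_Zsqrt_0_iff[OF assms]
    by (simp add: zs_cong_def zs_sub_def)
qed

theorem lemma2p2:
  fixes p :: nat and D :: int
  assumes "prime p" and "odd p"
    and "D mod 4 = 3"
    and "\<not> QuadRes (int p) D"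
  shows "zs_cong (int p) (zs_pow D (B_p D p) ((p - 1) div 2)) zs_one"
proof -
  have "p > 2"
    using assms(1,2) prime_ge_2_nat[OF assms(1)] by (metis dvd_refl le_neq_implies_less)
  have "cong_Zsqrt D (int p) (zs_to_complex D (B_p D p)) 1"
    unfolding zs_to_complex_B_p using assms(1) \<open>p > 2\<close> assms(4) by (rule prod_one_minus_pow_cong_1)
  then have "cong_Zsqrt D (int p) (zs_to_complex D (B_p D p) ^ ((p - 1) div 2)) (1 ^ ((p - 1) div 2))"
    by (rule cong_Zsqrt_power) (auto simp: zs_to_complex_def intro: ZsqrtI)
  then show ?thesis
    using not_QuadRes_not_square[OF assms(4)]
    by (simp add: zs_cong_iff_cong_Zsqrt zs_to_complex_pow)
qed

end
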